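(* Let $\Gamma$ be a finitely generated, residually finite group, let $(\Gamma_i)_{i\in\mathbb N^*}$ be a nested sequence of finite index normal subgroups of $\Gamma$ with trivial intersection, and let $1\le p\le\infty$. If the box space $\Box_{\{\Gamma_i\}}\Gamma$ admits a coarse embedding into some $L^p$ space, then $\Gamma$ has property $PL^p$.
   Context: An $L^p$ space means $L^p(\Omega,\mu)$ for some measure space. A map $f:X\to B$ from a metric space $(X,d)$ to a Banach space is a coarse embedding if there are non-decreasing $\rho_1,\rho_2:[0,\infty)\to(-\infty,\infty)$ with $\rho_i(r)\to+\infty$ as $r\to\infty$ and $\rho_1(d(x,y))\le\|f(x)-f(y)\|\le\rho_2(d(x,y))$ for all $x,y\in X$. $\Gamma$ has property $PL^p$ if there is an isometric affine action $\alpha(g)v=\pi(g)v+b(g)$ of $\Gamma$ on some $L^p$ space ($\pi$ an isometric linear representation, $b$ a 1-cocycle: $b(gh)=\pi(g)b(h)+b(g)$) with $\|b(g)\|\to\infty$ as $g\to\infty$. Box space: fix a finite generating set of $\Gamma$; $\Box_{\{\Gamma_i\}}\Gamma$ is the disjoint union of the finite groups $\Gamma/\Gamma_i$, each with the word metric induced by the image of the generating set, with distances between identity elements of successive quotients larger than the maximum of their diameters (distances between distinct pieces tending to infinity). *)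

theory Defs
  imports "HOL-Probability.Probability" "HOL-Algebra.Coset" "HOL-Algebra.Generated_Groups"
begin

text \<open>Elements of L^p(M) are represented by measurable real functions; two
functions represent the same element iff they agree M-almost everywhere.\<close>

definition Lp_norm :: "'a measure \<Rightarrow> ennreal \<Rightarrow> ('a \<Rightarrow> real) \<Rightarrow> real" where
  "Lp_norm M p f =
     (if p = \<infinity> then real_of_ereal (esssup M (\<lambda>x. ereal \<bar>f x\<bar>))
      else (\<integral>x. \<bar>f x\<bar> powr (enn2real p) \<partial>M) powr (1 / enn2real p))"

definition Lp_space :: "'a measure \<Rightarrow> ennreal \<Rightarrow> ('a \<Rightarrow> real) set" where
  "Lp_space M p =
     {f \<in> borel_measurable M.
        (if p = \<infinity> then esssup M (\<lambda>x. ereal \<bar>f x\<bar>) < \<infinity>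
         else integrable M (\<lambda>x. \<bar>f x\<bar> powr (enn2real p)))}"

definition ae_eq :: "'a measure \<Rightarrow> ('a \<Rightarrow> real) \<Rightarrow> ('a \<Rightarrow> real) \<Rightarrow> bool" where
  "ae_eq M f g \<longleftrightarrow> (AE x in M. f x = g x)"

definition coarse_embedding_Lp ::
  "'x set \<Rightarrow> ('x \<Rightarrow> 'x \<Rightarrow> real) \<Rightarrow> 'a measure \<Rightarrow> ennreal \<Rightarrow> ('x \<Rightarrow> 'a \<Rightarrow> real) \<Rightarrow> bool" where
  "coarse_embedding_Lp X d M p f \<longleftrightarrow>
     (\<forall>x\<in>X. f x \<in> Lp_space M p) \<and>
     (\<exists>rho1 rho2 :: real \<Rightarrow> real.
        mono_on (atLeast 0) rho1 \<and> mono_on (atLeast 0) rho2 \<and>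
        filterlim rho1 at_top at_top \<and> filterlim rho2 at_top at_top \<and>
        (\<forall>x\<in>X. \<forall>y\<in>X. rho1 (d x y) \<le> Lp_norm M p (\<lambda>w. f x w - f y w) \<and>
                       Lp_norm M p (\<lambda>w. f x w - f y w) \<le> rho2 (d x y)))"

definition word_dist :: "('g, 'm) monoid_scheme \<Rightarrow> 'g set \<Rightarrow> 'g \<Rightarrow> 'g \<Rightarrow> nat" where
  "word_dist H S x y =
     (LEAST n. \<exists>ws. set ws \<subseteq> S \<union> (\<lambda>s. inv\<^bsub>H\<^esub> s) ` S \<and> length ws = n \<and>
                    y = x \<otimes>\<^bsub>H\<^esub> foldr (\<lambda>s t. s \<otimes>\<^bsub>H\<^esub> t) ws \<one>\<^bsub>H\<^esub>)"

definition piece_dist :: "('g, 'm) monoid_scheme \<Rightarrow> 'g set \<Rightarrow> (nat \<Rightarrow> 'g set) \<Rightarrow> nat \<Rightarrow> 'g set \<Rightarrow> 'g set \<Rightarrow> real" where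
  "piece_dist G S N i x y =
     real (word_dist (G Mod N i) ((\<lambda>s. N i #>\<^bsub>G\<^esub> s) ` S) x y)"

definition piece_diam :: "('g, 'm) monoid_scheme \<Rightarrow> 'g set \<Rightarrow> (nat \<Rightarrow> 'g set) \<Rightarrow> nat \<Rightarrow> real" where
  "piece_diam G S N i =
     Max {piece_dist G S N i x y | x y. x \<in> rcosets\<^bsub>G\<^esub> N i \<and> y \<in> rcosets\<^bsub>G\<^esub> N i}"

definition box_space :: "('g, 'm) monoid_scheme \<Rightarrow> (nat \<Rightarrow> 'g set) \<Rightarrow> (nat \<times> 'g set) set" where
  "box_space G N = {(i, x). x \<in> rcosets\<^bsub>G\<^esub> N i}"

text \<open>Box space metric: word metric inside each piece; points of distinct
pieces i, j are at distance diam_i + diam_j + i + j + 2, so the distance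
between pieces exceeds their diameters and tends to infinity.\<close>

definition box_dist :: "('g, 'm) monoid_scheme \<Rightarrow> 'g set \<Rightarrow> (nat \<Rightarrow> 'g set) \<Rightarrow>
    nat \<times> 'g set \<Rightarrow> nat \<times> 'g set \<Rightarrow> real" where
  "box_dist G S N a b =
     (if fst a = fst b then piece_dist G S N (fst a) (snd a) (snd b)
      else piece_diam G S N (fst a) + piece_diam G S N (fst b)
           + real (fst a) + real (fst b) + 2)"

definition finite_index :: "('g, 'm) monoid_scheme \<Rightarrow> 'g set \<Rightarrow> bool" where
  "finite_index G H \<longleftrightarrow> finite (rcosets\<^bsub>G\<^esub> H)"

definition residually_finite :: "('g, 'm) monoid_scheme \<Rightarrow> bool" where
  "residually_finite G \<longleftrightarrow>
     (\<forall>g\<in>carrier G. g \<noteq> \<one>\<^bsub>G\<^esub> \<longrightarrow>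
        (\<exists>H. H \<lhd> G \<and> finite_index G H \<and> g \<notin> H))"

text \<open>An isometric affine action g . v = pi g v + b g of G on L^p(M):
pi is an isometric linear representation (well defined on a.e.-classes),
b a 1-cocycle, and the cocycle is proper (norm of b g tends to infinity
as g leaves finite subsets of G).\<close>

definition proper_affine_Lp_action ::
  "('g, 'm) monoid_scheme \<Rightarrow> 'a measure \<Rightarrow> ennreal \<Rightarrow>
   ('g \<Rightarrow> ('a \<Rightarrow> real) \<Rightarrow> ('a \<Rightarrow> real)) \<Rightarrow> ('g \<Rightarrow> 'a \<Rightarrow> real) \<Rightarrow> bool" where
  "proper_affine_Lp_action G M p \<pi> b \<longleftrightarrow>
     (\<forall>g\<in>carrier G. \<forall>f\<in>Lp_space M p. \<pi> g f \<in> Lp_space M p) \<and>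
     (\<forall>g\<in>carrier G. \<forall>f\<in>Lp_space M p. \<forall>h\<in>Lp_space M p.
        ae_eq M f h \<longrightarrow> ae_eq M (\<pi> g f) (\<pi> g h)) \<and>
     (\<forall>g\<in>carrier G. \<forall>f\<in>Lp_space M p. \<forall>h\<in>Lp_space M p. \<forall>c::real.
        ae_eq M (\<pi> g (\<lambda>x. f x + c * h x)) (\<lambda>x. \<pi> g f x + c * \<pi> g h x)) \<and>
     (\<forall>g\<in>carrier G. \<forall>f\<in>Lp_space M p. Lp_norm M p (\<pi> g f) = Lp_norm M p f) \<and>
     (\<forall>f\<in>Lp_space M p. ae_eq M (\<pi> \<one>\<^bsub>G\<^esub> f) f) \<and>
     (\<forall>g\<in>carrier G. \<forall>h\<in>carrier G. \<forall>f\<in>Lp_space M p.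
        ae_eq M (\<pi> (g \<otimes>\<^bsub>G\<^esub> h) f) (\<pi> g (\<pi> h f))) \<and>
     (\<forall>g\<in>carrier G. b g \<in> Lp_space M p) \<and>
     (\<forall>g\<in>carrier G. \<forall>h\<in>carrier G.
        ae_eq M (b (g \<otimes>\<^bsub>G\<^esub> h)) (\<lambda>x. \<pi> g (b h) x + b g x)) \<and>
     (\<forall>R::real. finite {g \<in> carrier G. Lp_norm M p (b g) \<le> R})"

end

theory Submission
  imports Defs
begin

text \<open>
Let \<open>\<rho>\<^sub>1, \<rho>\<^sub>2\<close> control the coarse embedding \<open>f\<close> and let \<open>|g|\<close> be the word length. For each
radius \<open>n\<close> pick a level \<open>j(n)\<close> at which \<open>\<Gamma> \<rightarrow> \<Gamma>/\<Gamma>\<^sub>j\<^sub>(\<^sub>n\<^sub>)\<close> is injective on the \<open>n\<close>-ball. Right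
translation by \<open>g\<close> then moves every point of the piece \<open>\<Gamma>/\<Gamma>\<^sub>j\<^sub>(\<^sub>n\<^sub>)\<close> by at most \<open>|g|\<close>, and by
exactly \<open>|g|\<close> once \<open>|g| \<le> n\<close>. So \<open>\<Gamma>\<close> acts by right translation on the disjoint union of
these pieces (tensored with the measure space of \<open>f\<close>), and \<open>b(g)(n, z) = f(z) - f(z g)\<close> is a
1-cocycle whose slice at \<open>(n, z)\<close> has norm at most \<open>\<rho>\<^sub>2(|g|)\<close>, and at least \<open>\<rho>\<^sub>1(|g|)\<close> once
\<open>n \<ge> |g|\<close>. Giving piece \<open>n\<close> total mass \<open>T(n) - T(n + 1)\<close> with \<open>T(n) = max(1, \<rho>\<^sub>1(n))\<^sup>-\<^sup>1\<^sup>/\<^sup>2\<close>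
keeps \<open>b(g)\<close> in \<open>L\<^sup>p\<close>, while \<open>\<parallel>b(g)\<parallel>\<^sub>p\<^sup>p \<ge> T(|g|) \<rho>\<^sub>1(|g|)\<^sup>p \<ge> \<rho>\<^sub>1(|g|)\<^sup>1\<^sup>/\<^sup>2 \<rightarrow> \<infinity>\<close>.
For \<open>p = \<infinity>\<close> unit masses suffice.
\<close>

lemma nn_integral_count_space_pair_measure:
  fixes M :: "'b measure"
  assumes "F \<in> borel_measurable (count_space (UNIV::'i set) \<Otimes>\<^sub>M M)"
  shows "(\<integral>\<^sup>+y. F y \<partial>(count_space UNIV \<Otimes>\<^sub>M M)) = (\<integral>\<^sup>+x. \<integral>\<^sup>+\<omega>. F (x,\<omega>) \<partial>M \<partial>count_space UNIV)"
  using assms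
proof (induction rule: borel_measurable_induct)
  case (cong f g)
  have "(\<integral>\<^sup>+y. f y \<partial>(count_space UNIV \<Otimes>\<^sub>M M)) = (\<integral>\<^sup>+y. g y \<partial>(count_space UNIV \<Otimes>\<^sub>M M))"
    by (rule nn_integral_cong) (use cong in auto)
  also have "\<dots> = (\<integral>\<^sup>+x. \<integral>\<^sup>+\<omega>. g (x,\<omega>) \<partial>M \<partial>count_space UNIV)" by fact
  also have "\<dots> = (\<integral>\<^sup>+x. \<integral>\<^sup>+\<omega>. f (x,\<omega>) \<partial>M \<partial>count_space UNIV)"
    by (intro nn_integral_cong) (use cong in \<open>auto simp: space_pair_measure\<close>)
  finally show ?case .
next
  case (set A)
  then show ?case by (simp add: emeasure_prod_count_space)
next
  case (mult u c)
  have "\<And>x. (\<lambda>\<omega>. u (x,\<omega>)) \<in> borel_measurable M" using mult(2) by (rule measurable_Pair2) simp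
  then show ?case using mult by (simp add: nn_integral_cmult)
next
  case (add u v)
  have "\<And>x. (\<lambda>\<omega>. u (x,\<omega>)) \<in> borel_measurable M" "\<And>x. (\<lambda>\<omega>. v (x,\<omega>)) \<in> borel_measurable M"
    using add by (auto intro: measurable_Pair2)
  then show ?case using add by (simp add: nn_integral_add)
next
  case (seq U)
  have m: "\<And>i x. (\<lambda>\<omega>. U i (x,\<omega>)) \<in> borel_measurable M" using seq(1) by (auto intro: measurable_Pair2)
  have inc: "\<And>x. incseq (\<lambda>i \<omega>. U i (x,\<omega>))" using \<open>incseq U\<close> by (auto simp: incseq_def le_fun_def)
  have "(\<integral>\<^sup>+y. (SUP i. U i) y \<partial>(count_space UNIV \<Otimes>\<^sub>M M)) = (SUP i. \<integral>\<^sup>+y. U i y \<partial>(count_space UNIV \<Otimes>\<^sub>M M))"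
    unfolding SUP_apply by (rule nn_integral_monotone_convergence_SUP[OF \<open>incseq U\<close>]) (use seq in auto)
  also have "\<dots> = (SUP i. \<integral>\<^sup>+x. \<integral>\<^sup>+\<omega>. U i (x,\<omega>) \<partial>M \<partial>count_space UNIV)" using seq by simp
  also have "\<dots> = (\<integral>\<^sup>+x. (SUP i. \<integral>\<^sup>+\<omega>. U i (x,\<omega>) \<partial>M) \<partial>count_space UNIV)"
    by (rule nn_integral_monotone_convergence_SUP[symmetric])
       (use inc m in \<open>auto simp: incseq_def le_fun_def intro!: nn_integral_mono\<close>)
  also have "\<dots> = (\<integral>\<^sup>+x. \<integral>\<^sup>+\<omega>. (SUP i. U i) (x,\<omega>) \<partial>M \<partial>count_space UNIV)"
    unfolding SUP_apply
    by (intro nn_integral_cong nn_integral_monotone_convergence_SUP[symmetric] inc m)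
  finally show ?case .
qed

lemma measurable_pair_count_space_countable_support:
  fixes \<Phi> :: "'i \<Rightarrow> 'b \<Rightarrow> real"
  assumes D: "countable D" and m: "\<And>x. x \<in> D \<Longrightarrow> \<Phi> x \<in> borel_measurable M"
    and z: "\<And>x \<omega>. x \<notin> D \<Longrightarrow> \<Phi> x \<omega> = 0"
  shows "(\<lambda>y. \<Phi> (fst y) (snd y)) \<in> borel_measurable (count_space UNIV \<Otimes>\<^sub>M M)"
proof (cases "D = {}")
  case True
  then have "(\<lambda>y. \<Phi> (fst y) (snd y)) = (\<lambda>y. 0)" using z by auto
  then show ?thesis by simp
next
  case False
  then obtain d where d: "d \<in> D" by auto
  define F where "F i y = (if fst y \<in> D then \<Phi> i (snd y) else 0)" for i and y :: "'i \<times> 'b"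
  have Dset: "{y \<in> space (count_space UNIV \<Otimes>\<^sub>M M). fst y \<in> D} \<in> sets (count_space UNIV \<Otimes>\<^sub>M M)"
  proof -
    have "{y \<in> space (count_space UNIV \<Otimes>\<^sub>M M). fst y \<in> D} = fst -` D \<inter> space (count_space UNIV \<Otimes>\<^sub>M M)"
      by auto
    then show ?thesis by (simp add: measurable_sets[OF measurable_fst])
  qed
  have "(\<lambda>y. F (if fst y \<in> D then fst y else d) y) \<in> borel_measurable (count_space UNIV \<Otimes>\<^sub>M M)"
  proof (rule measurable_compose_countable'[OF _ _ D])
    fix i assume "i \<in> D"
    then have "(\<lambda>y. \<Phi> i (snd y)) \<in> borel_measurable (count_space UNIV \<Otimes>\<^sub>M M)"
      by (intro measurable_compose[OF measurable_snd] m)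
    then show "F i \<in> borel_measurable (count_space UNIV \<Otimes>\<^sub>M M)"
      unfolding F_def by (rule measurable_If[OF _ _ Dset]) simp_all
  next
    have "(\<lambda>x. if x \<in> D then x else d) \<in> measurable (count_space UNIV) (count_space D)"
      using d by (simp add: measurable_count_space_eq1)
    then show "(\<lambda>y. if fst y \<in> D then fst y else d) \<in> measurable (count_space UNIV \<Otimes>\<^sub>M M) (count_space D)"
      by (rule measurable_compose[OF measurable_fst])
  qed
  moreover have "(\<lambda>y. F (if fst y \<in> D then fst y else d) y) = (\<lambda>y. \<Phi> (fst y) (snd y))"
    using z by (auto simp: F_def)
  ultimately show ?thesis by simp
qed

definition weighted_prod :: "'b measure \<Rightarrow> ('i \<Rightarrow> real) \<Rightarrow> ('i \<times> 'b) measure" where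
  "weighted_prod M w = density (count_space UNIV \<Otimes>\<^sub>M M) (\<lambda>y. ennreal (w (fst y)))"

lemma sets_weighted_prod [simp]: "sets (weighted_prod M w) = sets (count_space UNIV \<Otimes>\<^sub>M M)"
  by (simp add: weighted_prod_def)

lemma space_weighted_prod [simp]: "space (weighted_prod M w) = UNIV \<times> space M"
  by (simp add: weighted_prod_def space_pair_measure)

lemma measurable_weighted_prod_iff [simp]:
  "measurable (weighted_prod M w) N = measurable (count_space UNIV \<Otimes>\<^sub>M M) N"
  "measurable N (weighted_prod M w) = measurable N (count_space UNIV \<Otimes>\<^sub>M M)"
  by (simp_all cong: measurable_cong_sets)

lemma measurable_weight_fst:
  "(\<lambda>y. ennreal (w (fst y))) \<in> borel_measurable (count_space UNIV \<Otimes>\<^sub>M M)"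
proof -
  have "(\<lambda>y. w (fst y)) \<in> borel_measurable (count_space UNIV \<Otimes>\<^sub>M M)"
    by (rule measurable_compose[OF measurable_fst]) simp
  then show ?thesis by simp
qed

lemma measurable_map_prod_weighted_prod:
  "map_prod \<tau> id \<in> measurable (weighted_prod M w) (weighted_prod M w)"
proof -
  have \<tau>: "(\<lambda>y. (\<tau> (fst y), snd y)) \<in> measurable (count_space UNIV \<Otimes>\<^sub>M M) (count_space UNIV \<Otimes>\<^sub>M M)"
    by (intro measurable_Pair measurable_compose[OF measurable_fst]) auto
  have eq: "map_prod \<tau> id = (\<lambda>y. (\<tau> (fst y), snd y))" by (auto simp: map_prod_def)
  show ?thesis by (simp only: eq \<tau> measurable_weighted_prod_iff)
qed

lemma nn_integral_weighted_prod:
  fixes M :: "'b measure" and w :: "'i \<Rightarrow> real"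
  assumes F: "F \<in> borel_measurable (count_space UNIV \<Otimes>\<^sub>M M)"
  shows "(\<integral>\<^sup>+y. F y \<partial>weighted_prod M w) = (\<integral>\<^sup>+x. ennreal (w x) * \<integral>\<^sup>+\<omega>. F (x,\<omega>) \<partial>M \<partial>count_space UNIV)"
proof -
  have Fx: "\<And>x. (\<lambda>\<omega>. F (x,\<omega>)) \<in> borel_measurable M" using F by (rule measurable_Pair2) simp
  have "(\<integral>\<^sup>+y. F y \<partial>weighted_prod M w) = (\<integral>\<^sup>+y. ennreal (w (fst y)) * F y \<partial>(count_space UNIV \<Otimes>\<^sub>M M))"
    unfolding weighted_prod_def by (rule nn_integral_density[OF measurable_weight_fst F])
  also have "\<dots> = (\<integral>\<^sup>+x. \<integral>\<^sup>+\<omega>. ennreal (w x) * F (x,\<omega>) \<partial>M \<partial>count_space UNIV)"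
    by (subst nn_integral_count_space_pair_measure) (use measurable_weight_fst[of w M] F in auto)
  also have "\<dots> = (\<integral>\<^sup>+x. ennreal (w x) * \<integral>\<^sup>+\<omega>. F (x,\<omega>) \<partial>M \<partial>count_space UNIV)"
    by (intro nn_integral_cong nn_integral_cmult Fx)
  finally show ?thesis .
qed

lemma AE_weighted_prod_slice:
  fixes M :: "'b measure" and w :: "'i \<Rightarrow> real"
  assumes "AE y in weighted_prod M w. P y" and "w x > 0"
  shows "AE \<omega> in M. P (x,\<omega>)"
proof -
  have "AE y in count_space UNIV \<Otimes>\<^sub>M M. 0 < ennreal (w (fst y)) \<longrightarrow> P y"
    using assms(1) unfolding weighted_prod_def by (subst (asm) AE_density[OF measurable_weight_fst])
  then obtain N where N: "{y \<in> space (count_space UNIV \<Otimes>\<^sub>M M). \<not> (0 < ennreal (w (fst y)) \<longrightarrow> P y)} \<subseteq> N"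
    "N \<in> sets (count_space UNIV \<Otimes>\<^sub>M M)" "emeasure (count_space UNIV \<Otimes>\<^sub>M M) N = 0"
    by (auto elim!: AE_E)
  have Nx: "\<And>x. (\<lambda>\<omega>. indicator N (x,\<omega>) :: ennreal) \<in> borel_measurable M"
    using N(2) by (intro measurable_Pair2[of _ "count_space UNIV"]) auto
  have "(\<integral>\<^sup>+x. \<integral>\<^sup>+\<omega>. indicator N (x,\<omega>) \<partial>M \<partial>count_space UNIV) = 0"
    using N(3) by (simp add: emeasure_prod_count_space[OF N(2)])
  then have "AE x in count_space UNIV. (\<integral>\<^sup>+\<omega>. indicator N (x,\<omega>) \<partial>M) = 0"
    by (subst (asm) nn_integral_0_iff_AE) auto
  then have "AE \<omega> in M. indicator N (x,\<omega>) = (0::ennreal)"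
    by (simp add: AE_count_space nn_integral_0_iff_AE[OF Nx])
  then show ?thesis
  proof (rule AE_mp, intro AE_I2 impI)
    fix \<omega> assume "\<omega> \<in> space M" "indicator N (x,\<omega>) = (0::ennreal)"
    then show "P (x,\<omega>)" using N(1) assms(2) by (auto simp: space_pair_measure subset_iff indicator_def)
  qed
qed

lemma AE_weighted_prodI:
  fixes M :: "'b measure" and w :: "'i \<Rightarrow> real"
  assumes meas: "{y \<in> space (count_space UNIV \<Otimes>\<^sub>M M). \<not> P y} \<in> sets (count_space UNIV \<Otimes>\<^sub>M M)"
    and slices: "\<And>x. w x > 0 \<Longrightarrow> AE \<omega> in M. P (x,\<omega>)"
  shows "AE y in weighted_prod M w. P y"
proof -
  let ?N = "{y \<in> space (count_space UNIV \<Otimes>\<^sub>M M). \<not> P y}"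
  have "emeasure (weighted_prod M w) ?N = (\<integral>\<^sup>+y. indicator ?N y \<partial>weighted_prod M w)"
    using meas by simp
  also have "\<dots> = (\<integral>\<^sup>+x. ennreal (w x) * \<integral>\<^sup>+\<omega>. indicator ?N (x,\<omega>) \<partial>M \<partial>count_space UNIV)"
    using meas by (intro nn_integral_weighted_prod) simp
  also have "\<dots> = (\<integral>\<^sup>+x. 0 \<partial>count_space (UNIV::'i set))"
  proof (rule nn_integral_cong)
    fix x
    show "ennreal (w x) * (\<integral>\<^sup>+\<omega>. indicator ?N (x,\<omega>) \<partial>M) = 0"
    proof (cases "w x > 0")
      case True
      have "(\<integral>\<^sup>+\<omega>. indicator ?N (x,\<omega>) \<partial>M) = (\<integral>\<^sup>+\<omega>. 0 \<partial>M)"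
        using slices[OF True]
        by (intro nn_integral_cong_AE) (auto elim!: AE_mp simp: space_pair_measure indicator_def)
      then show ?thesis by simp
    next
      case False then show ?thesis by (simp add: ennreal_eq_0_iff)
    qed
  qed
  finally have "emeasure (weighted_prod M w) ?N = 0" by simp
  then show ?thesis
    by (intro AE_I'[of ?N]) (use meas in \<open>auto simp: space_pair_measure\<close>)
qed

lemma distr_weighted_prod_reindex:
  fixes M :: "'b measure" and w :: "'i \<Rightarrow> real"
  assumes bij: "bij \<tau>" and w: "\<And>x. w (\<tau> x) = w x"
  shows "distr (weighted_prod M w) (weighted_prod M w) (map_prod \<tau> id) = weighted_prod M w"
proof (rule measure_eqI)
  show "sets (distr (weighted_prod M w) (weighted_prod M w) (map_prod \<tau> id)) = sets (weighted_prod M w)"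
    by simp
  fix A assume "A \<in> sets (distr (weighted_prod M w) (weighted_prod M w) (map_prod \<tau> id))"
  then have A: "A \<in> sets (count_space UNIV \<Otimes>\<^sub>M M)" by simp
  have iA: "indicator A \<in> borel_measurable (count_space UNIV \<Otimes>\<^sub>M M)" using A by simp
  have iA\<tau>: "(\<lambda>y. indicator A (map_prod \<tau> id y)) \<in> borel_measurable (count_space UNIV \<Otimes>\<^sub>M M)"
    using measurable_compose[OF measurable_map_prod_weighted_prod[of \<tau> M w], of "indicator A" borel] iA
    by simp
  have "emeasure (distr (weighted_prod M w) (weighted_prod M w) (map_prod \<tau> id)) A
      = (\<integral>\<^sup>+y. indicator A y \<partial>distr (weighted_prod M w) (weighted_prod M w) (map_prod \<tau> id))"
    using A by simp
  also have "\<dots> = (\<integral>\<^sup>+y. indicator A (map_prod \<tau> id y) \<partial>weighted_prod M w)"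
    by (rule nn_integral_distr[OF measurable_map_prod_weighted_prod]) (use iA in simp)
  also have "\<dots> = (\<integral>\<^sup>+x. ennreal (w (\<tau> x)) * \<integral>\<^sup>+\<omega>. indicator A (\<tau> x, \<omega>) \<partial>M \<partial>count_space UNIV)"
    by (simp add: nn_integral_weighted_prod[OF iA\<tau>] w)
  also have "\<dots> = (\<integral>\<^sup>+x. ennreal (w x) * \<integral>\<^sup>+\<omega>. indicator A (x, \<omega>) \<partial>M \<partial>count_space UNIV)"
    by (rule nn_integral_bij_count_space[where f="\<lambda>x. ennreal (w x) * \<integral>\<^sup>+\<omega>. indicator A (x, \<omega>) \<partial>M"])
       (use bij in simp)
  also have "\<dots> = emeasure (weighted_prod M w) A"
    using A by (simp add: nn_integral_weighted_prod[OF iA, symmetric])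
  finally show "emeasure (distr (weighted_prod M w) (weighted_prod M w) (map_prod \<tau> id)) A
      = emeasure (weighted_prod M w) A" .
qed

lemma nn_integral_uniform_on_pieces:
  fixes e :: "nat \<Rightarrow> real" and K :: "nat \<Rightarrow> 'z set"
  assumes K: "\<And>n. finite (K n)" "\<And>n. K n \<noteq> {}" and e: "\<And>n. 0 \<le> e n"
  shows "(\<integral>\<^sup>+x. ennreal (if snd x \<in> K (fst x) then e (fst x) / card (K (fst x)) else 0) \<partial>count_space UNIV)
         = (\<Sum>n. ennreal (e n))"
proof -
  define A where "A n = {n} \<times> K n" for n
  have disj: "disjoint_family A" by (auto simp: disjoint_family_on_def A_def)
  have eq: "ennreal (if snd x \<in> K (fst x) then e (fst x) / card (K (fst x)) else 0)
      = (\<Sum>n. ennreal (e n / card (K n)) * indicator (A n) x)" for x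
  proof (cases "snd x \<in> K (fst x)")
    case True
    then have "x \<in> A (fst x)" by (cases x) (auto simp: A_def)
    then show ?thesis using True by (simp add: suminf_cmult_indicator[OF disj])
  next
    case False
    then have "\<And>n. x \<notin> A n" by (auto simp: A_def)
    then show ?thesis using False by simp
  qed
  have piece: "(\<integral>\<^sup>+x. ennreal (e n / card (K n)) * indicator (A n) x \<partial>count_space UNIV) = ennreal (e n)" for n
  proof -
    have "card (A n) = card (K n)" "card (K n) > 0" "finite (A n)"
      using K by (simp_all add: A_def card_cartesian_product card_gt_0_iff)
    then show ?thesis
      using e by (simp add: nn_integral_cmult_indicator ennreal_of_nat_eq_real_of_nat ennreal_mult[symmetric])
  qed
  show ?thesis
    by (simp add: eq nn_integral_suminf piece del: ennreal_of_nat_eq_real_of_nat)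
qed

lemma Lp_space_measurable: "F \<in> Lp_space M p \<Longrightarrow> F \<in> borel_measurable M"
  by (simp add: Lp_space_def)

lemma one_le_enn2real: "1 \<le> p \<Longrightarrow> p \<noteq> \<infinity> \<Longrightarrow> 1 \<le> enn2real p"
  by (cases p rule: ennreal_cases) (auto simp: ennreal_le_iff)

lemma abs_diff_powr_le:
  fixes a b q :: real
  assumes "0 \<le> q"
  shows "\<bar>a - b\<bar> powr q \<le> 2 powr q * (\<bar>a\<bar> powr q + \<bar>b\<bar> powr q)"
proof -
  have "\<bar>a - b\<bar> powr q \<le> (2 * max \<bar>a\<bar> \<bar>b\<bar>) powr q" by (intro powr_mono2) (use assms in auto)
  also have "\<dots> = 2 powr q * max \<bar>a\<bar> \<bar>b\<bar> powr q" by (simp add: powr_mult)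
  also have "\<dots> \<le> 2 powr q * (\<bar>a\<bar> powr q + \<bar>b\<bar> powr q)"
    by (intro mult_left_mono) (auto simp: max_def)
  finally show ?thesis .
qed

lemma Lp_space_diff:
  assumes p: "1 \<le> p" and F: "F \<in> Lp_space M p" and H: "H \<in> Lp_space M p"
  shows "(\<lambda>x. F x - H x) \<in> Lp_space M p"
proof -
  have Fm: "F \<in> borel_measurable M" and Hm: "H \<in> borel_measurable M"
    using F H by (auto simp: Lp_space_def)
  show ?thesis
  proof (cases "p = \<infinity>")
    case True
    have "esssup M (\<lambda>x. ereal \<bar>F x - H x\<bar>) \<le> esssup M (\<lambda>x. ereal \<bar>F x\<bar> + ereal \<bar>H x\<bar>)"
      by (rule esssup_mono) (use Fm Hm in auto)
    also have "\<dots> \<le> esssup M (\<lambda>x. ereal \<bar>F x\<bar>) + esssup M (\<lambda>x. ereal \<bar>H x\<bar>)"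
      by (rule esssup_add)
    also have "\<dots> < \<infinity>" using F H True by (simp add: Lp_space_def)
    finally show ?thesis using True Fm Hm by (simp add: Lp_space_def)
  next
    case False
    define q where "q = enn2real p"
    have q: "1 \<le> q" using one_le_enn2real[OF p False] by (simp add: q_def)
    have "integrable M (\<lambda>x. 2 powr q * (\<bar>F x\<bar> powr q + \<bar>H x\<bar> powr q))"
      using F H False by (auto simp: Lp_space_def q_def)
    moreover have "(\<lambda>x. \<bar>F x - H x\<bar> powr q) \<in> borel_measurable M" using Fm Hm by measurable
    moreover have "AE x in M. norm (\<bar>F x - H x\<bar> powr q) \<le> norm (2 powr q * (\<bar>F x\<bar> powr q + \<bar>H x\<bar> powr q))"
      using abs_diff_powr_le[of q] q by (intro AE_I2) simp
    ultimately have "integrable M (\<lambda>x. \<bar>F x - H x\<bar> powr q)"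
      by (rule Bochner_Integration.integrable_bound)
    then show ?thesis using False Fm Hm by (simp add: Lp_space_def q_def)
  qed
qed

lemma Lp_norm_nonneg: "p \<noteq> \<infinity> \<Longrightarrow> 0 \<le> Lp_norm M p F"
  by (simp add: Lp_norm_def)

lemma nn_integral_powr_eq_Lp_norm_powr:
  assumes p: "1 \<le> p" "p \<noteq> \<infinity>" and F: "F \<in> Lp_space M p"
  shows "(\<integral>\<^sup>+x. ennreal (\<bar>F x\<bar> powr enn2real p) \<partial>M) = ennreal (Lp_norm M p F powr enn2real p)"
proof -
  let ?q = "enn2real p" and ?I = "\<integral>x. \<bar>F x\<bar> powr enn2real p \<partial>M"
  have "integrable M (\<lambda>x. \<bar>F x\<bar> powr ?q)" using F p by (auto simp: Lp_space_def)
  then have "(\<integral>\<^sup>+x. ennreal (\<bar>F x\<bar> powr ?q) \<partial>M) = ennreal ?I"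
    by (rule nn_integral_eq_integral) simp
  moreover have "(?I powr (1 / ?q)) powr ?q = ?I"
    using one_le_enn2real[OF p] integral_nonneg_AE[of "\<lambda>x. \<bar>F x\<bar> powr ?q" M]
    by (simp add: powr_powr)
  ultimately show ?thesis using p by (simp add: Lp_norm_def)
qed

lemma esssup_distr:
  fixes g :: "'b \<Rightarrow> ereal"
  assumes e: "e \<in> measurable M N" and g: "g \<in> borel_measurable N"
  shows "esssup (distr M N e) g = esssup M (\<lambda>x. g (e x))"
proof -
  have "{z. AE x in distr M N e. g x \<le> z} = {z. AE x in M. g (e x) \<le> z}"
    using g by (intro Collect_cong AE_distr_iff[OF e]) measurable
  moreover have "(\<lambda>x. g (e x)) \<in> borel_measurable M" using g e by (rule measurable_compose[rotated])
  ultimately show ?thesis using g by (simp add: esssup_eq_AE)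
qed

lemma
  assumes e: "e \<in> measurable M N" and F: "F \<in> borel_measurable N"
  shows Lp_norm_distr: "Lp_norm (distr M N e) p F = Lp_norm M p (\<lambda>x. F (e x))"
    and Lp_space_distr: "F \<in> Lp_space (distr M N e) p \<longleftrightarrow> (\<lambda>x. F (e x)) \<in> Lp_space M p"
proof -
  have "(\<lambda>x. ereal \<bar>F x\<bar>) \<in> borel_measurable N" "\<And>r. (\<lambda>x. \<bar>F x\<bar> powr r) \<in> borel_measurable N"
    using F by measurable
  moreover have "(\<lambda>x. F (e x)) \<in> borel_measurable M" using F e by (rule measurable_compose[rotated])
  ultimately show "Lp_norm (distr M N e) p F = Lp_norm M p (\<lambda>x. F (e x))"
    and "F \<in> Lp_space (distr M N e) p \<longleftrightarrow> (\<lambda>x. F (e x)) \<in> Lp_space M p"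
    using F by (simp_all add: Lp_norm_def Lp_space_def esssup_distr[OF e] integral_distr[OF e]
        integrable_distr_eq[OF e])
qed

lemma ae_eq_distr:
  assumes e: "e \<in> measurable M N" and "F \<in> borel_measurable N" and "H \<in> borel_measurable N"
  shows "ae_eq (distr M N e) F H \<longleftrightarrow> ae_eq M (\<lambda>x. F (e x)) (\<lambda>x. H (e x))"
  unfolding ae_eq_def by (rule AE_distr_iff[OF e]) (use assms in measurable)

lemma
  assumes e: "inj e" and H: "H \<in> Lp_space M p"
  shows Lp_space_embed_measure_inv: "(\<lambda>y. H (inv_into UNIV e y)) \<in> Lp_space (embed_measure M e) p"
    and Lp_norm_embed_measure_inv: "Lp_norm (embed_measure M e) p (\<lambda>y. H (inv_into UNIV e y)) = Lp_norm M p H"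
proof -
  have "(\<lambda>y. H (inv_into UNIV e y)) \<in> borel_measurable (embed_measure M e)"
    using e Lp_space_measurable[OF H] by (intro measurable_embed_measure1) simp
  then show "(\<lambda>y. H (inv_into UNIV e y)) \<in> Lp_space (embed_measure M e) p"
    and "Lp_norm (embed_measure M e) p (\<lambda>y. H (inv_into UNIV e y)) = Lp_norm M p H"
    using Lp_norm_distr[OF measurable_embed_measure2[OF e]] Lp_space_distr[OF measurable_embed_measure2[OF e]] e H
    by (simp_all add: embed_measure_eq_distr[OF e, symmetric])
qed

lemma
  assumes e: "inj e" and F: "F \<in> Lp_space (embed_measure M e) p"
  shows Lp_space_embed_measure: "(\<lambda>x. F (e x)) \<in> Lp_space M p"
    and Lp_norm_embed_measure: "Lp_norm (embed_measure M e) p F = Lp_norm M p (\<lambda>x. F (e x))"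
  using Lp_norm_distr[OF measurable_embed_measure2[OF e] Lp_space_measurable[OF F]]
    Lp_space_distr[OF measurable_embed_measure2[OF e] Lp_space_measurable[OF F]] F
  by (simp_all add: embed_measure_eq_distr[OF e, symmetric])

lemma ae_eq_embed_measure:
  "inj e \<Longrightarrow> ae_eq (embed_measure M e) F H \<longleftrightarrow> ae_eq M (\<lambda>x. F (e x)) (\<lambda>x. H (e x))"
  unfolding ae_eq_def by (rule AE_embed_measure)

lemma proper_affine_Lp_action_embed_measure:
  assumes act: "proper_affine_Lp_action G M p \<pi> b" and e: "inj e"
  shows "proper_affine_Lp_action G (embed_measure M e) p
           (\<lambda>g F y. \<pi> g (\<lambda>x. F (e x)) (inv_into UNIV e y)) (\<lambda>g y. b g (inv_into UNIV e y))"
proof -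
  let ?M = "embed_measure M e"
  have inv_e [simp]: "inv_into UNIV e (e x) = x" for x using e by simp
  note A = act[unfolded proper_affine_Lp_action_def]
  note Lp = Lp_space_embed_measure[OF e] Lp_space_embed_measure_inv[OF e]
  show ?thesis
    unfolding proper_affine_Lp_action_def
  proof (intro conjI ballI allI impI)
    fix g F assume g: "g \<in> carrier G" and F: "F \<in> Lp_space ?M p"
    have Fe: "(\<lambda>x. F (e x)) \<in> Lp_space M p" by (rule Lp(1)[OF F])
    then have H: "\<pi> g (\<lambda>x. F (e x)) \<in> Lp_space M p" using A g by blast
    show "(\<lambda>y. \<pi> g (\<lambda>x. F (e x)) (inv_into UNIV e y)) \<in> Lp_space ?M p"
      by (rule Lp(2)[OF H])
    show "Lp_norm ?M p (\<lambda>y. \<pi> g (\<lambda>x. F (e x)) (inv_into UNIV e y)) = Lp_norm ?M p F"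
      using A g Fe by (simp add: Lp_norm_embed_measure_inv[OF e H] Lp_norm_embed_measure[OF e F])
  next
    fix g F H assume g: "g \<in> carrier G" and F: "F \<in> Lp_space ?M p" and H: "H \<in> Lp_space ?M p"
      and "ae_eq ?M F H"
    then have "ae_eq M (\<lambda>x. F (e x)) (\<lambda>x. H (e x))" by (simp add: ae_eq_embed_measure[OF e])
    then have "ae_eq M (\<pi> g (\<lambda>x. F (e x))) (\<pi> g (\<lambda>x. H (e x)))"
      using A g Lp(1)[OF F] Lp(1)[OF H] by blast
    then show "ae_eq ?M (\<lambda>y. \<pi> g (\<lambda>x. F (e x)) (inv_into UNIV e y)) (\<lambda>y. \<pi> g (\<lambda>x. H (e x)) (inv_into UNIV e y))"
      by (simp add: ae_eq_embed_measure[OF e])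
  next
    fix g F H and c :: real
    assume g: "g \<in> carrier G" and F: "F \<in> Lp_space ?M p" and H: "H \<in> Lp_space ?M p"
    have "\<forall>g\<in>carrier G. \<forall>f\<in>Lp_space M p. \<forall>h\<in>Lp_space M p. \<forall>c::real.
        ae_eq M (\<pi> g (\<lambda>x. f x + c * h x)) (\<lambda>x. \<pi> g f x + c * \<pi> g h x)"
      using A by blast
    from this[rule_format, OF g Lp(1)[OF F] Lp(1)[OF H]] show "ae_eq ?M (\<lambda>y. \<pi> g (\<lambda>x. F (e x) + c * H (e x)) (inv_into UNIV e y))
        (\<lambda>y. \<pi> g (\<lambda>x. F (e x)) (inv_into UNIV e y) + c * \<pi> g (\<lambda>x. H (e x)) (inv_into UNIV e y))"
      by (simp add: ae_eq_embed_measure[OF e])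
  next
    fix F assume "F \<in> Lp_space ?M p"
    then have "ae_eq M (\<pi> \<one>\<^bsub>G\<^esub> (\<lambda>x. F (e x))) (\<lambda>x. F (e x))" using A Lp(1) by metis
    then show "ae_eq ?M (\<lambda>y. \<pi> \<one>\<^bsub>G\<^esub> (\<lambda>x. F (e x)) (inv_into UNIV e y)) F"
      by (simp add: ae_eq_embed_measure[OF e])
  next
    fix g h F assume g: "g \<in> carrier G" and h: "h \<in> carrier G" and F: "F \<in> Lp_space ?M p"
    have "ae_eq M (\<pi> (g \<otimes>\<^bsub>G\<^esub> h) (\<lambda>x. F (e x))) (\<pi> g (\<pi> h (\<lambda>x. F (e x))))"
      using A g h Lp(1)[OF F] by blast
    then show "ae_eq ?M (\<lambda>y. \<pi> (g \<otimes>\<^bsub>G\<^esub> h) (\<lambda>x. F (e x)) (inv_into UNIV e y))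
        (\<lambda>y. \<pi> g (\<lambda>x. \<pi> h (\<lambda>x. F (e x)) (inv_into UNIV e (e x))) (inv_into UNIV e y))"
      by (simp add: ae_eq_embed_measure[OF e])
  next
    fix g assume "g \<in> carrier G"
    then show "(\<lambda>y. b g (inv_into UNIV e y)) \<in> Lp_space ?M p" using A by (blast intro: Lp(2))
  next
    fix g h assume "g \<in> carrier G" "h \<in> carrier G"
    then have "ae_eq M (b (g \<otimes>\<^bsub>G\<^esub> h)) (\<lambda>x. \<pi> g (b h) x + b g x)" using A by blast
    then show "ae_eq ?M (\<lambda>y. b (g \<otimes>\<^bsub>G\<^esub> h) (inv_into UNIV e y))
        (\<lambda>y. \<pi> g (\<lambda>x. b h (inv_into UNIV e (e x))) (inv_into UNIV e y) + b g (inv_into UNIV e y))"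
      by (simp add: ae_eq_embed_measure[OF e])
  next
    fix R :: real
    have "{g \<in> carrier G. Lp_norm ?M p (\<lambda>y. b g (inv_into UNIV e y)) \<le> R} = {g \<in> carrier G. Lp_norm M p (b g) \<le> R}"
      using A Lp_norm_embed_measure_inv[OF e] by auto
    then show "finite {g \<in> carrier G. Lp_norm ?M p (\<lambda>y. b g (inv_into UNIV e y)) \<le> R}" using A by simp
  qed
qed

definition word_prod :: "('g, 'm) monoid_scheme \<Rightarrow> 'g list \<Rightarrow> 'g" where
  "word_prod G ws = foldr (\<lambda>s t. s \<otimes>\<^bsub>G\<^esub> t) ws \<one>\<^bsub>G\<^esub>"

definition word_length :: "('g, 'm) monoid_scheme \<Rightarrow> 'g set \<Rightarrow> 'g \<Rightarrow> nat" where
  "word_length G S g = word_dist G S \<one>\<^bsub>G\<^esub> g"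

lemma word_prod_simps [simp]:
  "word_prod G [] = \<one>\<^bsub>G\<^esub>"
  "word_prod G (s # ws) = s \<otimes>\<^bsub>G\<^esub> word_prod G ws"
  by (simp_all add: word_prod_def)

context group
begin

abbreviation letters :: "'a set \<Rightarrow> 'a set" where
  "letters S \<equiv> S \<union> (\<lambda>s. inv s) ` S"

lemma word_prod_closed: "S \<subseteq> carrier G \<Longrightarrow> set ws \<subseteq> letters S \<Longrightarrow> word_prod G ws \<in> carrier G"
  by (induction ws) auto

lemma word_prod_append:
  "S \<subseteq> carrier G \<Longrightarrow> set ws \<subseteq> letters S \<Longrightarrow> set vs \<subseteq> letters S \<Longrightarrow>
    word_prod G (ws @ vs) = word_prod G ws \<otimes> word_prod G vs"
  by (induction ws) (auto simp: m_assoc word_prod_closed subset_eq)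

lemma generate_word_prod:
  assumes S: "S \<subseteq> carrier G" and g: "g \<in> generate G S"
  shows "\<exists>ws. set ws \<subseteq> letters S \<and> g = word_prod G ws"
  using g
proof (induction rule: generate.induct)
  case one then show ?case by (intro exI[of _ "[]"]) simp
next
  case (incl h) then show ?case using S by (intro exI[of _ "[h]"]) auto
next
  case (inv h) then show ?case using S by (intro exI[of _ "[inv h]"]) auto
next
  case (eng h1 h2)
  then obtain ws vs where "set ws \<subseteq> letters S" "h1 = word_prod G ws" "set vs \<subseteq> letters S" "h2 = word_prod G vs"
    by blast
  then show ?case using S by (intro exI[of _ "ws @ vs"]) (auto simp: word_prod_append)
qed

lemma word_length_attained:
  assumes S: "S \<subseteq> carrier G" and gen: "generate G S = carrier G" and g: "g \<in> carrier G"
  shows "\<exists>ws. set ws \<subseteq> letters S \<and> length ws = word_length G S g \<and> g = word_prod G ws"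
proof -
  let ?P = "\<lambda>n. \<exists>ws. set ws \<subseteq> letters S \<and> length ws = n \<and> g = \<one> \<otimes> foldr (\<lambda>s t. s \<otimes> t) ws \<one>"
  obtain ws where "set ws \<subseteq> letters S" "g = word_prod G ws" using generate_word_prod[OF S] g gen by blast
  then have "?P (length ws)" using S by (auto simp: word_prod_def[symmetric] word_prod_closed)
  then have "?P (LEAST n. ?P n)" by (rule LeastI)
  then show ?thesis
    using S unfolding word_length_def word_dist_def by (auto simp: word_prod_def[symmetric] word_prod_closed)
qed

lemma word_length_le:
  assumes "S \<subseteq> carrier G" and "set ws \<subseteq> letters S"
  shows "word_length G S (word_prod G ws) \<le> length ws"
  unfolding word_length_def word_dist_def
  by (rule Least_le) (use assms in \<open>auto simp: word_prod_def[symmetric] word_prod_closed\<close>)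

lemma finite_word_ball:
  assumes S: "S \<subseteq> carrier G" "finite S" and gen: "generate G S = carrier G"
  shows "finite {g \<in> carrier G. word_length G S g \<le> n}"
proof -
  have "{g \<in> carrier G. word_length G S g \<le> n} \<subseteq> word_prod G ` {ws. set ws \<subseteq> letters S \<and> length ws \<le> n}"
    using word_length_attained[OF S(1) gen] by fastforce
  moreover have "finite {ws. set ws \<subseteq> letters S \<and> length ws \<le> n}"
    by (rule finite_lists_length_le) (use S in auto)
  ultimately show ?thesis by (meson finite_imageI finite_subset)
qed

lemma exists_level_inj_on_word_ball:
  assumes S: "S \<subseteq> carrier G" "finite S" and gen: "generate G S = carrier G"
    and N: "\<And>i. N i \<lhd> G" and decr: "\<And>i. N (Suc i) \<subseteq> N i" and triv: "(\<Inter>i. N i) = {\<one>}"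
  shows "\<exists>j. inj_on (\<lambda>x. N j #> x) {x \<in> carrier G. word_length G S x \<le> n}"
proof -
  let ?B = "{x \<in> carrier G. word_length G S x \<le> n}"
  let ?P = "{(x, y) \<in> ?B \<times> ?B. x \<noteq> y}"
  have "\<forall>p \<in> ?P. \<exists>j. snd p \<otimes> inv (fst p) \<notin> N j"
  proof clarsimp
    fix x y assume x: "x \<in> carrier G" and y: "y \<in> carrier G" and "x \<noteq> y"
    then have "y \<otimes> inv x \<noteq> \<one>" by (metis inv_closed inv_equality inv_inv)
    then have "y \<otimes> inv x \<notin> (\<Inter>i. N i)" by (simp add: triv)
    then show "\<exists>j. y \<otimes> inv x \<notin> N j" by blast
  qed
  then obtain level where level: "\<forall>p \<in> ?P. snd p \<otimes> inv (fst p) \<notin> N (level p)"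
    by (metis (no_types, lifting) bchoice)
  define J where "J = Max (level ` ?P)"
  have "finite ?P"
    using finite_word_ball[OF S gen, of n] by (auto intro: finite_subset[of _ "?B \<times> ?B"])
  then have "level (x, y) \<le> J" if "(x, y) \<in> ?P" for x y
    using that unfolding J_def by (intro Max_ge) auto
  then have deeper: "N J \<subseteq> N (level (x, y))" if "(x, y) \<in> ?P" for x y
    using that by (intro lift_Suc_antimono_le[of N, OF decr])
  show ?thesis
  proof (intro exI inj_onI, rule ccontr)
    fix x y assume x: "x \<in> ?B" and y: "y \<in> ?B" and eq: "N J #> x = N J #> y" and "x \<noteq> y"
    then have xy: "(x, y) \<in> ?P" by simp
    interpret NJ: normal "N J" G by (rule N)
    have "y \<in> N J #> x" using repr_independenceD[OF NJ.subgroup_axioms _ eq] y by simp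
    then obtain k where k: "k \<in> N J" "y = k \<otimes> x" by (auto simp: r_coset_def)
    moreover have "k \<otimes> x \<otimes> inv x = k" using k(1) x NJ.subset by (auto simp: m_assoc)
    ultimately have "y \<otimes> inv x \<in> N J" by simp
    then show False using level deeper[OF xy] xy by fastforce
  qed
qed

end

context normal
begin

lemma rcosets_mult_closed:
  assumes "z \<in> rcosets H" and "g \<in> carrier G"
  shows "z #> g \<in> rcosets H"
  using assms by (auto simp: RCOSETS_def coset_mult_assoc subset)

lemma set_mult_rcos_eq:
  assumes "z \<in> rcosets H" and "g \<in> carrier G"
  shows "z <#> (H #> g) = z #> g"
  using assms by (auto simp: RCOSETS_def rcos_sum coset_mult_assoc subset)

lemma FactGroup_word_prod:
  assumes S: "S \<subseteq> carrier G" and ws: "set ws \<subseteq> letters S"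
  shows "foldr (<#>) (map (\<lambda>s. H #> s) ws) H = H #> word_prod G ws"
  using ws
proof (induction ws)
  case Nil then show ?case by (simp add: coset_mult_one subset)
next
  case (Cons a ws)
  then have "a \<in> carrier G" "word_prod G ws \<in> carrier G" using S word_prod_closed by auto
  with Cons show ?case by (simp add: rcos_sum)
qed

lemma FactGroup_letters:
  assumes S: "S \<subseteq> carrier G"
  shows "(\<lambda>s. H #> s) ` S \<union> (\<lambda>s. inv\<^bsub>G Mod H\<^esub> s) ` ((\<lambda>s. H #> s) ` S) = (\<lambda>s. H #> s) ` letters S"
proof -
  have "inv\<^bsub>G Mod H\<^esub> (H #> s) = H #> inv s" if s: "s \<in> carrier G" for s
  proof -
    have "H #> s \<in> carrier (G Mod H)" using s by (simp add: FactGroup_def rcosetsI subset)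
    then show ?thesis using s by (simp add: inv_FactGroup rcos_inv)
  qed
  then show ?thesis using S by (auto simp: subsetD image_image)
qed

lemma rcos_left_cancel:
  assumes z: "z \<in> rcosets H" and g: "g \<in> carrier G" and h: "h \<in> carrier G" and eq: "z #> g = z #> h"
  shows "H #> g = H #> h"
proof -
  interpret Q: group "G Mod H" by (rule factorgroup_is_group)
  have "z \<otimes>\<^bsub>G Mod H\<^esub> (H #> g) = z \<otimes>\<^bsub>G Mod H\<^esub> (H #> h)"
    using eq by (simp add: set_mult_rcos_eq[OF z g] set_mult_rcos_eq[OF z h])
  moreover have "z \<in> Units (G Mod H)" "H #> g \<in> carrier (G Mod H)" "H #> h \<in> carrier (G Mod H)"
    using z g h by (simp_all add: Q.Units_eq) (simp_all add: FactGroup_def rcosetsI subset)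
  ultimately show ?thesis by (metis Q.Units_l_cancel)
qed

lemma word_dist_FactGroup_le:
  assumes S: "S \<subseteq> carrier G" and gen: "generate G S = carrier G"
    and z: "z \<in> rcosets H" and g: "g \<in> carrier G"
  shows "word_dist (G Mod H) ((\<lambda>s. H #> s) ` S) z (z #> g) \<le> word_length G S g"
proof -
  obtain ws where ws: "set ws \<subseteq> letters S" "length ws = word_length G S g" "g = word_prod G ws"
    using word_length_attained[OF S gen g] by blast
  show ?thesis
    unfolding word_dist_def FactGroup_letters[OF S]
  proof (rule Least_le, intro exI conjI)
    show "set (map (\<lambda>s. H #> s) ws) \<subseteq> (\<lambda>s. H #> s) ` letters S" using ws by auto
    show "length (map (\<lambda>s. H #> s) ws) = word_length G S g" using ws by simp
    show "z #> g = z \<otimes>\<^bsub>G Mod H\<^esub> foldr (\<lambda>s t. s \<otimes>\<^bsub>G Mod H\<^esub> t) (map (\<lambda>s. H #> s) ws) \<one>\<^bsub>G Mod H\<^esub>"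
      using FactGroup_word_prod[OF S ws(1)] set_mult_rcos_eq[OF z] g ws by simp
  qed
qed

lemma word_dist_FactGroup_ge:
  assumes S: "S \<subseteq> carrier G" and gen: "generate G S = carrier G"
    and z: "z \<in> rcosets H" and g: "g \<in> carrier G"
    and inj: "inj_on (\<lambda>x. H #> x) {x \<in> carrier G. word_length G S x \<le> n}"
    and g_n: "word_length G S g \<le> n"
  shows "word_length G S g \<le> word_dist (G Mod H) ((\<lambda>s. H #> s) ` S) z (z #> g)"
proof (rule ccontr)
  let ?P = "\<lambda>m. \<exists>qs. set qs \<subseteq> (\<lambda>s. H #> s) ` letters S \<and> length qs = m \<and>
       z #> g = z \<otimes>\<^bsub>G Mod H\<^esub> foldr (\<lambda>s t. s \<otimes>\<^bsub>G Mod H\<^esub> t) qs \<one>\<^bsub>G Mod H\<^esub>"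
  assume "\<not> word_length G S g \<le> word_dist (G Mod H) ((\<lambda>s. H #> s) ` S) z (z #> g)"
  then have shorter: "(LEAST m. ?P m) < word_length G S g"
    unfolding word_dist_def FactGroup_letters[OF S] by simp
  obtain ws0 where "set ws0 \<subseteq> letters S" "g = word_prod G ws0"
    using word_length_attained[OF S gen g] by blast
  then have "?P (length ws0)"
    using FactGroup_word_prod[OF S] set_mult_rcos_eq[OF z] g
    by (intro exI[of _ "map (\<lambda>s. H #> s) ws0"]) auto
  then have "?P (LEAST m. ?P m)" by (rule LeastI)
  then obtain qs where qs: "set qs \<subseteq> (\<lambda>s. H #> s) ` letters S" "length qs = (LEAST m. ?P m)"
      "z #> g = z <#> foldr (<#>) qs H"
    by auto
  have "qs \<in> lists ((\<lambda>s. H #> s) ` letters S)" using qs(1) by (simp add: lists_eq_set)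
  then obtain ws where ws: "qs = map (\<lambda>s. H #> s) ws" "set ws \<subseteq> letters S"
    unfolding lists_image by (auto simp: lists_eq_set)
  let ?h = "word_prod G ws"
  have h: "?h \<in> carrier G" using word_prod_closed[OF S ws(2)] .
  have "z #> g = z #> ?h"
    using qs(3) by (simp add: ws(1) FactGroup_word_prod[OF S ws(2)] set_mult_rcos_eq[OF z h])
  then have same_coset: "H #> g = H #> ?h" by (rule rcos_left_cancel[OF z g h])
  have h_shorter: "word_length G S ?h < word_length G S g"
    using word_length_le[OF S ws(2)] qs(2) ws(1) shorter by simp
  have "g = ?h" by (rule inj_onD[OF inj same_coset]) (use g h g_n h_shorter in simp_all)
  then show False using h_shorter by simp
qed

end

lemma suminf_ennreal_telescope_tail:
  fixes T :: "nat \<Rightarrow> real"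
  assumes dec: "decseq T" and lim: "T \<longlonglongrightarrow> 0"
  shows "(\<Sum>n. ennreal (if L \<le> n then T n - T (Suc n) else 0)) = ennreal (T L)"
proof -
  define e where "e n = (if L \<le> n then T n - T (Suc n) else 0)" for n
  have "(\<lambda>n. T (n + L)) \<longlonglongrightarrow> 0" using lim by (rule LIMSEQ_ignore_initial_segment)
  from telescope_sums'[OF this] have "(\<lambda>n. e (n + L)) sums T L" by (simp add: e_def)
  then have e_sums: "e sums T L" by (subst (asm) sums_zero_iff_shift) (auto simp: e_def)
  have "0 \<le> e n" for n using dec by (simp add: e_def decseq_Suc_iff)
  then have "(\<Sum>n. ennreal (e n)) = ennreal (\<Sum>n. e n)"
    by (intro suminf_ennreal2 sums_summable[OF e_sums])
  also have "\<dots> = ennreal (T L)" using e_sums by (simp add: sums_iff)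
  finally show ?thesis by (simp add: e_def)
qed

lemma sqrt_le_inverse_sqrt_mult_powr:
  fixes r q :: real
  assumes r: "1 \<le> r" and q: "1 \<le> q"
  shows "sqrt r \<le> inverse (sqrt r) * r powr q"
proof -
  have "r powr 1 \<le> r powr q" by (rule powr_mono) (use q r in auto)
  then have "r \<le> r powr q" using r by simp
  moreover have "sqrt r = inverse (sqrt r) * r" using r by (simp add: field_simps)
  ultimately show ?thesis using r by (metis inverse_nonnegative_iff_nonnegative mult_left_mono real_sqrt_ge_zero
        order.trans zero_le_one)
qed

locale coarse_box_embedding = group G for G :: "('g, 'm) monoid_scheme" (structure) +
  fixes S :: "'g set" and N :: "nat \<Rightarrow> 'g set" and M :: "'a measure" and p :: ennreal
    and f :: "nat \<times> 'g set \<Rightarrow> 'a \<Rightarrow> real" and \<rho>\<^sub>1 \<rho>\<^sub>2 :: "real \<Rightarrow> real" and level :: "nat \<Rightarrow> nat"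
  assumes finite_S: "finite S" and S_carrier: "S \<subseteq> carrier G" and generate_S: "generate G S = carrier G"
    and normal_N: "\<And>i. N i \<lhd> G" and finite_index_N: "\<And>i. finite_index G (N i)"
    and one_le_p: "1 \<le> p"
    and f_Lp: "\<And>x. x \<in> box_space G N \<Longrightarrow> f x \<in> Lp_space M p"
    and mono_\<rho>\<^sub>1: "mono_on (atLeast 0) \<rho>\<^sub>1" and mono_\<rho>\<^sub>2: "mono_on (atLeast 0) \<rho>\<^sub>2"
    and \<rho>\<^sub>1_at_top: "filterlim \<rho>\<^sub>1 at_top at_top"
    and f_coarse: "\<And>x y. x \<in> box_space G N \<Longrightarrow> y \<in> box_space G N \<Longrightarrow>
       \<rho>\<^sub>1 (box_dist G S N x y) \<le> Lp_norm M p (\<lambda>w. f x w - f y w) \<and>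
       Lp_norm M p (\<lambda>w. f x w - f y w) \<le> \<rho>\<^sub>2 (box_dist G S N x y)"
    and level_inj: "\<And>n. inj_on (\<lambda>x. N (level n) #>\<^bsub>G\<^esub> x) {x \<in> carrier G. word_length G S x \<le> n}"
begin

text \<open>The space of the action is \<open>\<Union>\<^sub>n {n} \<times> piece n\<close> (tensored with \<open>M\<close>), where the \<open>n\<close>-th
piece is the box-space piece at \<open>level n\<close>; points \<open>(n, z)\<close> with \<open>z\<close> not a coset of that level
are junk, carry weight \<open>0\<close> and are fixed by the action.\<close>

definition piece :: "nat \<Rightarrow> 'g set set" where
  "piece n = rcosets\<^bsub>G\<^esub> (N (level n))"

definition translate :: "'g \<Rightarrow> nat \<times> 'g set \<Rightarrow> nat \<times> 'g set" where
  "translate g x = (fst x, if snd x \<in> piece (fst x) then snd x #>\<^bsub>G\<^esub> g else snd x)"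

definition displacement :: "'g \<Rightarrow> nat \<Rightarrow> 'g set \<Rightarrow> 'a \<Rightarrow> real" where
  "displacement g n z = (\<lambda>\<omega>. f (level n, z) \<omega> - f (level n, z #>\<^bsub>G\<^esub> g) \<omega>)"

definition cocycle :: "'g \<Rightarrow> (nat \<times> 'g set) \<times> 'a \<Rightarrow> real" where
  "cocycle g y = (if snd (fst y) \<in> piece (fst (fst y)) then displacement g (fst (fst y)) (snd (fst y)) (snd y) else 0)"

definition action :: "'g \<Rightarrow> ((nat \<times> 'g set) \<times> 'a \<Rightarrow> real) \<Rightarrow> (nat \<times> 'g set) \<times> 'a \<Rightarrow> real" where
  "action g F = (\<lambda>y. F (map_prod (translate g) id y))"

definition weight :: "(nat \<Rightarrow> real) \<Rightarrow> nat \<times> 'g set \<Rightarrow> real" where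
  "weight e x = (if snd x \<in> piece (fst x) then e (fst x) / card (piece (fst x)) else 0)"

lemma finite_piece: "finite (piece n)"
  using finite_index_N by (simp add: piece_def finite_index_def)

lemma piece_nonempty: "piece n \<noteq> {}"
proof -
  interpret normal "N (level n)" G by (rule normal_N)
  have "N (level n) #> \<one> \<in> piece n" unfolding piece_def by (rule rcosetsI) (auto simp: subset)
  then show ?thesis by auto
qed

lemma piece_subset_carrier: "z \<in> piece n \<Longrightarrow> z \<subseteq> carrier G"
proof -
  interpret normal "N (level n)" G by (rule normal_N)
  show "z \<in> piece n \<Longrightarrow> z \<subseteq> carrier G"
    by (auto simp: piece_def RCOSETS_def r_coset_def subset[THEN subsetD])
qed

lemma piece_mult_closed: "z \<in> piece n \<Longrightarrow> g \<in> carrier G \<Longrightarrow> z #> g \<in> piece n"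
proof -
  interpret normal "N (level n)" G by (rule normal_N)
  show "z \<in> piece n \<Longrightarrow> g \<in> carrier G \<Longrightarrow> z #> g \<in> piece n"
    unfolding piece_def by (rule rcosets_mult_closed)
qed

lemma piece_in_box_space: "z \<in> piece n \<Longrightarrow> (level n, z) \<in> box_space G N"
  by (simp add: piece_def box_space_def)

lemma countable_pieces: "countable {x. snd x \<in> piece (fst x)}"
proof -
  have "{x. snd x \<in> piece (fst x)} = (\<Union>n. {n} \<times> piece n)" by auto
  then show ?thesis using finite_piece by (simp add: countable_finite)
qed

lemma displacement_Lp: "z \<in> piece n \<Longrightarrow> g \<in> carrier G \<Longrightarrow> displacement g n z \<in> Lp_space M p"
  unfolding displacement_def by (intro Lp_space_diff[OF one_le_p] f_Lp piece_in_box_space piece_mult_closed)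

lemma box_dist_translate:
  "box_dist G S N (level n, z) (level n, z #> g)
     = real (word_dist (G Mod N (level n)) ((\<lambda>s. N (level n) #> s) ` S) z (z #> g))"
  by (simp add: box_dist_def piece_dist_def)

lemma Lp_norm_displacement_le:
  assumes z: "z \<in> piece n" and g: "g \<in> carrier G"
  shows "Lp_norm M p (displacement g n z) \<le> \<rho>\<^sub>2 (real (word_length G S g))"
proof -
  interpret normal "N (level n)" G by (rule normal_N)
  have "Lp_norm M p (displacement g n z) \<le> \<rho>\<^sub>2 (box_dist G S N (level n, z) (level n, z #> g))"
    using f_coarse[OF piece_in_box_space[OF z] piece_in_box_space[OF piece_mult_closed[OF z g]]]
    by (simp add: displacement_def)
  also have "\<dots> \<le> \<rho>\<^sub>2 (real (word_length G S g))"
    using word_dist_FactGroup_le[OF S_carrier generate_S z[unfolded piece_def] g]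
    by (intro mono_onD[OF mono_\<rho>\<^sub>2]) (auto simp: box_dist_translate)
  finally show ?thesis .
qed

lemma Lp_norm_displacement_ge:
  assumes z: "z \<in> piece n" and g: "g \<in> carrier G" and g_n: "word_length G S g \<le> n"
  shows "\<rho>\<^sub>1 (real (word_length G S g)) \<le> Lp_norm M p (displacement g n z)"
proof -
  interpret normal "N (level n)" G by (rule normal_N)
  have "\<rho>\<^sub>1 (real (word_length G S g)) \<le> \<rho>\<^sub>1 (box_dist G S N (level n, z) (level n, z #> g))"
    using word_dist_FactGroup_ge[OF S_carrier generate_S z[unfolded piece_def] g level_inj g_n]
    by (intro mono_onD[OF mono_\<rho>\<^sub>1]) (auto simp: box_dist_translate)
  also have "\<dots> \<le> Lp_norm M p (displacement g n z)"
    using f_coarse[OF piece_in_box_space[OF z] piece_in_box_space[OF piece_mult_closed[OF z g]]]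
    by (simp add: displacement_def)
  finally show ?thesis .
qed

lemma cocycle_measurable: "g \<in> carrier G \<Longrightarrow> cocycle g \<in> borel_measurable (count_space UNIV \<Otimes>\<^sub>M M)"
proof -
  assume g: "g \<in> carrier G"
  let ?\<Phi> = "\<lambda>x. if snd x \<in> piece (fst x) then displacement g (fst x) (snd x) else (\<lambda>_. 0)"
  have "(\<lambda>y. ?\<Phi> (fst y) (snd y)) \<in> borel_measurable (count_space UNIV \<Otimes>\<^sub>M M)"
    by (rule measurable_pair_count_space_countable_support[OF countable_pieces])
       (use displacement_Lp[OF _ g] in \<open>auto simp: Lp_space_def\<close>)
  moreover have "(\<lambda>y. ?\<Phi> (fst y) (snd y)) = cocycle g" by (auto simp: cocycle_def)
  ultimately show ?thesis by simp
qed

lemma translate_mult: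
  assumes g: "g \<in> carrier G" and h: "h \<in> carrier G"
  shows "translate (g \<otimes> h) x = translate h (translate g x)"
proof (cases "snd x \<in> piece (fst x)")
  case True
  then have "snd x #> g #> h = snd x #> (g \<otimes> h)"
    using g h by (simp add: coset_mult_assoc piece_subset_carrier)
  then show ?thesis using True g by (simp add: translate_def piece_mult_closed)
next
  case False then show ?thesis by (simp add: translate_def)
qed

lemma translate_one: "translate \<one> x = x"
  by (simp add: translate_def coset_mult_one piece_subset_carrier)

lemma translate_inv_translate: "g \<in> carrier G \<Longrightarrow> translate (inv g) (translate g x) = x"
  using translate_mult[of g "inv g" x] by (simp add: translate_one)

lemma bij_translate: "g \<in> carrier G \<Longrightarrow> bij (translate g)"
  using translate_inv_translate[of g] translate_inv_translate[of "inv g"]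
  by (intro o_bij[of "translate (inv g)"]) (simp_all add: fun_eq_iff)

lemma weight_translate: "g \<in> carrier G \<Longrightarrow> weight e (translate g x) = weight e x"
  by (cases x) (auto simp: translate_def weight_def piece_mult_closed)

lemma cocycle_mult:
  assumes g: "g \<in> carrier G" and h: "h \<in> carrier G"
  shows "cocycle (g \<otimes> h) y = action g (cocycle h) y + cocycle g y"
proof (cases y)
  case (Pair x \<omega>)
  show ?thesis
  proof (cases "snd x \<in> piece (fst x)")
    case True
    then have "snd x #> g #> h = snd x #> (g \<otimes> h)"
      using g h by (simp add: coset_mult_assoc piece_subset_carrier)
    then show ?thesis
      using True g Pair by (simp add: cocycle_def action_def translate_def displacement_def piece_mult_closed)
  next
    case False then show ?thesis using Pair by (simp add: cocycle_def action_def translate_def)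
  qed
qed

lemma action_mult: "g \<in> carrier G \<Longrightarrow> h \<in> carrier G \<Longrightarrow> action (g \<otimes> h) F = action g (action h F)"
  by (auto simp: action_def translate_mult map_prod_def split: prod.splits)

lemma action_linear: "action g (\<lambda>y. F y + c * H y) = (\<lambda>y. action g F y + c * action g H y)"
  by (simp add: action_def)

lemma action_one: "action \<one> F = F"
  by (auto simp: action_def translate_one map_prod_def split: prod.splits)

lemma distr_translate:
  assumes "g \<in> carrier G"
  shows "distr (weighted_prod M (weight e)) (weighted_prod M (weight e)) (map_prod (translate g) id)
    = weighted_prod M (weight e)"
  using assms by (intro distr_weighted_prod_reindex bij_translate weight_translate)

lemma
  assumes g: "g \<in> carrier G" and F: "F \<in> Lp_space (weighted_prod M (weight e)) p"
  shows Lp_space_action: "action g F \<in> Lp_space (weighted_prod M (weight e)) p"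
    and Lp_norm_action: "Lp_norm (weighted_prod M (weight e)) p (action g F) = Lp_norm (weighted_prod M (weight e)) p F"
  using Lp_space_distr[OF measurable_map_prod_weighted_prod[of "translate g"] Lp_space_measurable[OF F], of p]
    Lp_norm_distr[OF measurable_map_prod_weighted_prod[of "translate g"] Lp_space_measurable[OF F], of p] F
  by (simp_all add: distr_translate[OF g] action_def)

lemma ae_eq_action:
  assumes g: "g \<in> carrier G"
    and "F \<in> borel_measurable (weighted_prod M (weight e))" "H \<in> borel_measurable (weighted_prod M (weight e))"
    and "ae_eq (weighted_prod M (weight e)) F H"
  shows "ae_eq (weighted_prod M (weight e)) (action g F) (action g H)"
  using assms ae_eq_distr[OF measurable_map_prod_weighted_prod[of "translate g" M "weight e"], of F H]
  by (simp add: distr_translate[OF g] action_def)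

lemma weight_nonneg: "(\<And>n. 0 \<le> e n) \<Longrightarrow> 0 \<le> weight e x"
  by (auto simp: weight_def)

lemma nn_integral_weight:
  "(\<And>n. 0 \<le> e n) \<Longrightarrow> (\<integral>\<^sup>+x. ennreal (weight e x) \<partial>count_space UNIV) = (\<Sum>n. ennreal (e n))"
  unfolding weight_def by (rule nn_integral_uniform_on_pieces[OF finite_piece piece_nonempty])

lemma finite_sublevel_if_\<rho>\<^sub>1_large:
  fixes \<nu> :: "'g \<Rightarrow> real"
  assumes large: "\<And>g. g \<in> carrier G \<Longrightarrow> Z \<le> \<rho>\<^sub>1 (real (word_length G S g)) \<Longrightarrow> R < \<nu> g"
  shows "finite {g \<in> carrier G. \<nu> g \<le> R}"
proof -
  obtain X where X: "\<And>x. x \<ge> X \<Longrightarrow> Z \<le> \<rho>\<^sub>1 x"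
    using \<rho>\<^sub>1_at_top by (auto simp: filterlim_at_top eventually_at_top_linorder)
  have "word_length G S g \<le> nat \<lceil>X\<rceil>" if g: "g \<in> carrier G" and "\<nu> g \<le> R" for g
  proof (rule ccontr)
    assume "\<not> word_length G S g \<le> nat \<lceil>X\<rceil>"
    then have "Z \<le> \<rho>\<^sub>1 (real (word_length G S g))" by (intro X) linarith
    then show False using large[OF g] \<open>\<nu> g \<le> R\<close> by linarith
  qed
  then have "{g \<in> carrier G. \<nu> g \<le> R} \<subseteq> {g \<in> carrier G. word_length G S g \<le> nat \<lceil>X\<rceil>}" by blast
  moreover have "finite {g \<in> carrier G. word_length G S g \<le> nat \<lceil>X\<rceil>}"
    by (rule finite_word_ball[OF S_carrier finite_S generate_S])
  ultimately show ?thesis by (rule finite_subset)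
qed

lemma nn_integral_cocycle_powr:
  assumes p: "p \<noteq> \<infinity>" and g: "g \<in> carrier G" and e: "\<And>n. 0 \<le> e n"
  shows "(\<integral>\<^sup>+y. ennreal (\<bar>cocycle g y\<bar> powr enn2real p) \<partial>weighted_prod M (weight e))
       = (\<integral>\<^sup>+x. ennreal (weight e x * Lp_norm M p (displacement g (fst x) (snd x)) powr enn2real p) \<partial>count_space UNIV)"
proof -
  have m: "(\<lambda>y. ennreal (\<bar>cocycle g y\<bar> powr enn2real p)) \<in> borel_measurable (count_space UNIV \<Otimes>\<^sub>M M)"
    using cocycle_measurable[OF g] by measurable
  show ?thesis
    unfolding nn_integral_weighted_prod[OF m]
  proof (intro nn_integral_cong)
    fix x :: "nat \<times> 'g set"
    show "ennreal (weight e x) * (\<integral>\<^sup>+\<omega>. ennreal (\<bar>cocycle g (x, \<omega>)\<bar> powr enn2real p) \<partial>M)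
        = ennreal (weight e x * Lp_norm M p (displacement g (fst x) (snd x)) powr enn2real p)"
    proof (cases "snd x \<in> piece (fst x)")
      case True
      then have "(\<integral>\<^sup>+\<omega>. ennreal (\<bar>cocycle g (x, \<omega>)\<bar> powr enn2real p) \<partial>M)
          = ennreal (Lp_norm M p (displacement g (fst x) (snd x)) powr enn2real p)"
        by (simp add: cocycle_def nn_integral_powr_eq_Lp_norm_powr[OF one_le_p p displacement_Lp[OF _ g]])
      then show ?thesis using weight_nonneg[OF e] by (simp add: ennreal_mult)
    next
      case False then show ?thesis by (simp add: weight_def)
    qed
  qed
qed

text \<open>The piece \<open>n\<close> gets total mass \<open>tail n - tail (Suc n)\<close>, so the pieces of index at least
\<open>|g|\<close>, where the displacement is at least \<open>\<rho>\<^sub>1(|g|)\<close>, carry total mass \<open>tail |g| = \<rho>\<^sub>1(|g|)\<^sup>-\<^sup>1\<^sup>/\<^sup>2\<close>.\<close>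

definition tail :: "nat \<Rightarrow> real" where
  "tail n = inverse (sqrt (max 1 (\<rho>\<^sub>1 (real n))))"

definition tail_gap :: "nat \<Rightarrow> real" where
  "tail_gap n = tail n - tail (Suc n)"

lemma decseq_tail: "decseq tail"
proof (rule decseq_SucI)
  fix n
  have "\<rho>\<^sub>1 (real n) \<le> \<rho>\<^sub>1 (real (Suc n))" by (rule mono_onD[OF mono_\<rho>\<^sub>1]) auto
  then show "tail (Suc n) \<le> tail n" unfolding tail_def by (intro le_imp_inverse_le) auto
qed

lemma tail_tendsto_zero: "tail \<longlonglongrightarrow> 0"
proof -
  have "filterlim (\<lambda>n. \<rho>\<^sub>1 (real n)) at_top sequentially"
    by (rule filterlim_compose[OF \<rho>\<^sub>1_at_top filterlim_real_sequentially])
  then have "filterlim (\<lambda>n. max 1 (\<rho>\<^sub>1 (real n))) at_top sequentially"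
    by (rule filterlim_at_top_mono) auto
  then have "filterlim (\<lambda>n. sqrt (max 1 (\<rho>\<^sub>1 (real n)))) at_top sequentially"
    by (rule filterlim_compose[OF sqrt_at_top])
  then show ?thesis unfolding tail_def by (rule tendsto_inverse_0_at_top)
qed

lemma tail_gap_nonneg: "0 \<le> tail_gap n"
  using decseq_tail by (simp add: tail_gap_def decseq_Suc_iff)

lemma nn_integral_weight_tail_gap_from:
  "(\<integral>\<^sup>+x. ennreal (weight (\<lambda>n. if L \<le> n then tail_gap n else 0) x) \<partial>count_space UNIV) = ennreal (tail L)"
proof -
  have "(\<integral>\<^sup>+x. ennreal (weight (\<lambda>n. if L \<le> n then tail_gap n else 0) x) \<partial>count_space UNIV)
      = (\<Sum>n. ennreal (if L \<le> n then tail_gap n else 0))"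
    by (rule nn_integral_weight) (simp add: tail_gap_nonneg)
  also have "\<dots> = ennreal (tail L)"
    unfolding tail_gap_def by (rule suminf_ennreal_telescope_tail[OF decseq_tail tail_tendsto_zero])
  finally show ?thesis .
qed

lemma Lp_space_cocycle_finite:
  assumes p: "p \<noteq> \<infinity>" and g: "g \<in> carrier G"
  shows "cocycle g \<in> Lp_space (weighted_prod M (weight tail_gap)) p"
proof -
  let ?q = "enn2real p"
  define B where "B = max 0 (\<rho>\<^sub>2 (real (word_length G S g)))"
  have le: "ennreal (weight tail_gap x * Lp_norm M p (displacement g (fst x) (snd x)) powr ?q)
      \<le> ennreal (weight tail_gap x) * ennreal (B powr ?q)" for x
  proof (cases "snd x \<in> piece (fst x)")
    case True
    have "Lp_norm M p (displacement g (fst x) (snd x)) \<le> B"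
      using Lp_norm_displacement_le[OF True g] by (simp add: B_def)
    then have "Lp_norm M p (displacement g (fst x) (snd x)) powr ?q \<le> B powr ?q"
      using Lp_norm_nonneg[OF p] by (intro powr_mono2) auto
    then show ?thesis
      using weight_nonneg[of tail_gap x, OF tail_gap_nonneg]
      by (simp add: ennreal_mult[symmetric] ennreal_leI mult_left_mono)
  next
    case False then show ?thesis by (simp add: weight_def)
  qed
  have "(\<integral>\<^sup>+y. ennreal (\<bar>cocycle g y\<bar> powr ?q) \<partial>weighted_prod M (weight tail_gap))
      \<le> (\<integral>\<^sup>+x. ennreal (weight tail_gap x) * ennreal (B powr ?q) \<partial>count_space UNIV)"
    unfolding nn_integral_cocycle_powr[OF p g tail_gap_nonneg] by (intro nn_integral_mono le)
  also have "\<dots> = (\<integral>\<^sup>+x. ennreal (weight tail_gap x) \<partial>count_space UNIV) * ennreal (B powr ?q)"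
    by (simp add: nn_integral_multc)
  also have "\<dots> < \<infinity>"
    using nn_integral_weight_tail_gap_from[of 0] by (simp add: ennreal_mult_less_top)
  finally have "integrable (weighted_prod M (weight tail_gap)) (\<lambda>y. \<bar>cocycle g y\<bar> powr ?q)"
    using cocycle_measurable[OF g] by (simp add: integrable_iff_bounded)
  then show ?thesis using cocycle_measurable[OF g] p by (simp add: Lp_space_def)
qed

lemma Lp_norm_cocycle_powr_ge_finite:
  assumes p: "p \<noteq> \<infinity>" and g: "g \<in> carrier G" and \<rho>: "0 \<le> \<rho>\<^sub>1 (real (word_length G S g))"
  shows "tail (word_length G S g) * \<rho>\<^sub>1 (real (word_length G S g)) powr enn2real p
    \<le> Lp_norm (weighted_prod M (weight tail_gap)) p (cocycle g) powr enn2real p"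
proof -
  let ?q = "enn2real p" and ?l = "word_length G S g"
  let ?e = "\<lambda>n. if ?l \<le> n then tail_gap n else 0"
  have le: "ennreal (weight ?e x) * ennreal (\<rho>\<^sub>1 ?l powr ?q)
      \<le> ennreal (weight tail_gap x * Lp_norm M p (displacement g (fst x) (snd x)) powr ?q)" for x
  proof (cases "snd x \<in> piece (fst x) \<and> ?l \<le> fst x")
    case True
    then have "\<rho>\<^sub>1 ?l \<le> Lp_norm M p (displacement g (fst x) (snd x))"
      using Lp_norm_displacement_ge g by blast
    then have "\<rho>\<^sub>1 ?l powr ?q \<le> Lp_norm M p (displacement g (fst x) (snd x)) powr ?q"
      using \<rho> by (intro powr_mono2) auto
    moreover have "weight ?e x = weight tail_gap x" using True by (simp add: weight_def)
    ultimately show ?thesis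
      using weight_nonneg[of tail_gap x, OF tail_gap_nonneg]
      by (simp add: ennreal_mult[symmetric] ennreal_leI mult_left_mono)
  next
    case False then show ?thesis by (auto simp: weight_def)
  qed
  have "ennreal (tail ?l * \<rho>\<^sub>1 ?l powr ?q)
      = (\<integral>\<^sup>+x. ennreal (weight ?e x) \<partial>count_space UNIV) * ennreal (\<rho>\<^sub>1 ?l powr ?q)"
    using decseq_tail tail_tendsto_zero
    by (simp add: nn_integral_weight_tail_gap_from ennreal_mult decseq_ge)
  also have "\<dots> = (\<integral>\<^sup>+x. ennreal (weight ?e x) * ennreal (\<rho>\<^sub>1 ?l powr ?q) \<partial>count_space UNIV)"
    by (simp add: nn_integral_multc)
  also have "\<dots> \<le> (\<integral>\<^sup>+y. ennreal (\<bar>cocycle g y\<bar> powr ?q) \<partial>weighted_prod M (weight tail_gap))"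
    unfolding nn_integral_cocycle_powr[OF p g tail_gap_nonneg] by (intro nn_integral_mono le)
  also have "\<dots> = ennreal (Lp_norm (weighted_prod M (weight tail_gap)) p (cocycle g) powr ?q)"
    by (rule nn_integral_powr_eq_Lp_norm_powr[OF one_le_p p Lp_space_cocycle_finite[OF p g]])
  finally show ?thesis by (subst (asm) ennreal_le_iff) auto
qed

lemma Lp_norm_cocycle_gt_finite:
  assumes p: "p \<noteq> \<infinity>" and g: "g \<in> carrier G"
    and large: "max 1 (((\<bar>R\<bar> + 1) powr enn2real p)\<^sup>2) \<le> \<rho>\<^sub>1 (real (word_length G S g))"
  shows "R < Lp_norm (weighted_prod M (weight tail_gap)) p (cocycle g)"
proof -
  let ?q = "enn2real p" and ?r = "\<rho>\<^sub>1 (real (word_length G S g))"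
  let ?\<nu> = "Lp_norm (weighted_prod M (weight tail_gap)) p (cocycle g)"
  have q: "1 \<le> ?q" and r: "1 \<le> ?r" using one_le_enn2real[OF one_le_p p] large by auto
  have "(\<bar>R\<bar> + 1) powr ?q \<le> sqrt ?r" by (rule real_le_rsqrt) (use large in simp)
  also have "\<dots> \<le> tail (word_length G S g) * ?r powr ?q"
    using sqrt_le_inverse_sqrt_mult_powr[OF r q] r by (simp add: tail_def)
  also have "\<dots> \<le> ?\<nu> powr ?q"
    using r by (intro Lp_norm_cocycle_powr_ge_finite[OF p g]) simp
  finally have le: "(\<bar>R\<bar> + 1) powr ?q \<le> ?\<nu> powr ?q" .
  show ?thesis
  proof (rule ccontr)
    assume "\<not> R < ?\<nu>"
    then have "?\<nu> powr ?q < (\<bar>R\<bar> + 1) powr ?q"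
      using q Lp_norm_nonneg[OF p] by (intro powr_less_mono2) auto
    with le show False by linarith
  qed
qed

lemma Lp_space_cocycle_infinite:
  assumes p: "p = \<infinity>" and g: "g \<in> carrier G"
  shows "cocycle g \<in> Lp_space (weighted_prod M (weight (\<lambda>_. 1))) p"
proof -
  define B where "B = max 0 (\<rho>\<^sub>2 (real (word_length G S g)))"
  have "AE y in weighted_prod M (weight (\<lambda>_. 1)). ereal \<bar>cocycle g y\<bar> \<le> ereal B"
  proof (rule AE_weighted_prodI)
    show "{y \<in> space (count_space UNIV \<Otimes>\<^sub>M M). \<not> ereal \<bar>cocycle g y\<bar> \<le> ereal B} \<in> sets (count_space UNIV \<Otimes>\<^sub>M M)"
      using cocycle_measurable[OF g] by measurable
    fix x :: "nat \<times> 'g set" assume "weight (\<lambda>_. 1) x > 0"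
    then have x: "snd x \<in> piece (fst x)" by (auto simp: weight_def split: if_splits)
    let ?h = "displacement g (fst x) (snd x)"
    have "esssup M (\<lambda>\<omega>. ereal \<bar>?h \<omega>\<bar>) < \<infinity>" using displacement_Lp[OF x g] p by (simp add: Lp_space_def)
    then have "esssup M (\<lambda>\<omega>. ereal \<bar>?h \<omega>\<bar>) \<le> ereal (Lp_norm M p ?h)"
      using p by (cases "esssup M (\<lambda>\<omega>. ereal \<bar>?h \<omega>\<bar>)") (auto simp: Lp_norm_def)
    also have "\<dots> \<le> ereal B" using Lp_norm_displacement_le[OF x g] by (simp add: B_def le_max_iff_disj)
    finally have sup_le: "esssup M (\<lambda>\<omega>. ereal \<bar>?h \<omega>\<bar>) \<le> ereal B" .
    show "AE \<omega> in M. ereal \<bar>cocycle g (x, \<omega>)\<bar> \<le> ereal B"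
      using esssup_AE[of "\<lambda>\<omega>. ereal \<bar>?h \<omega>\<bar>" M]
    proof (rule AE_mp, intro AE_I2 impI)
      fix \<omega> assume "ereal \<bar>?h \<omega>\<bar> \<le> esssup M (\<lambda>\<omega>. ereal \<bar>?h \<omega>\<bar>)"
      then have "ereal \<bar>?h \<omega>\<bar> \<le> ereal B" using sup_le by (rule order.trans)
      then show "ereal \<bar>cocycle g (x, \<omega>)\<bar> \<le> ereal B" using x by (simp add: cocycle_def)
    qed
  qed
  then have "esssup (weighted_prod M (weight (\<lambda>_. 1))) (\<lambda>y. ereal \<bar>cocycle g y\<bar>) \<le> ereal B"
    using cocycle_measurable[OF g] by (intro esssup_I) simp_all
  then have "esssup (weighted_prod M (weight (\<lambda>_. 1))) (\<lambda>y. ereal \<bar>cocycle g y\<bar>) < \<infinity>"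
    by (rule le_less_trans) simp
  then show ?thesis using cocycle_measurable[OF g] p by (simp add: Lp_space_def)
qed

lemma Lp_norm_cocycle_ge_infinite:
  assumes p: "p = \<infinity>" and g: "g \<in> carrier G" and \<rho>: "0 < \<rho>\<^sub>1 (real (word_length G S g))"
  shows "\<rho>\<^sub>1 (real (word_length G S g)) \<le> Lp_norm (weighted_prod M (weight (\<lambda>_. 1))) p (cocycle g)"
proof -
  let ?M = "weighted_prod M (weight (\<lambda>_. 1))" and ?l = "word_length G S g"
  obtain z where z: "z \<in> piece ?l" using piece_nonempty by blast
  let ?h = "displacement g ?l z"
  have positive: "weight (\<lambda>_. 1) (?l, z) > 0"
    using z finite_piece piece_nonempty by (auto simp: weight_def card_gt_0_iff)
  have cm: "(\<lambda>y. ereal \<bar>cocycle g y\<bar>) \<in> borel_measurable ?M" using cocycle_measurable[OF g] by simp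
  have hm: "(\<lambda>\<omega>. ereal \<bar>?h \<omega>\<bar>) \<in> borel_measurable M"
    using Lp_space_measurable[OF displacement_Lp[OF z g]] by measurable
  have "{c. AE y in ?M. ereal \<bar>cocycle g y\<bar> \<le> c} \<subseteq> {c. AE \<omega> in M. ereal \<bar>?h \<omega>\<bar> \<le> c}"
  proof
    fix c assume "c \<in> {c. AE y in ?M. ereal \<bar>cocycle g y\<bar> \<le> c}"
    then have "AE \<omega> in M. ereal \<bar>cocycle g ((?l, z), \<omega>)\<bar> \<le> c"
      by (intro AE_weighted_prod_slice[where P="\<lambda>y. ereal \<bar>cocycle g y\<bar> \<le> c" and w="weight (\<lambda>_. 1)",
          OF _ positive]) simp
    then show "c \<in> {c. AE \<omega> in M. ereal \<bar>?h \<omega>\<bar> \<le> c}" using z by (simp add: cocycle_def)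
  qed
  then have sup_le: "esssup M (\<lambda>\<omega>. ereal \<bar>?h \<omega>\<bar>) \<le> esssup ?M (\<lambda>y. ereal \<bar>cocycle g y\<bar>)"
    unfolding esssup_eq_AE[OF hm] esssup_eq_AE[OF cm] by (rule Inf_superset_mono)
  have lower: "\<rho>\<^sub>1 (real ?l) \<le> Lp_norm M p ?h" by (rule Lp_norm_displacement_ge[OF z g]) simp
  then have "0 \<le> esssup M (\<lambda>\<omega>. ereal \<bar>?h \<omega>\<bar>)"
    using \<rho> p by (cases "esssup M (\<lambda>\<omega>. ereal \<bar>?h \<omega>\<bar>)") (auto simp: Lp_norm_def)
  moreover have "esssup ?M (\<lambda>y. ereal \<bar>cocycle g y\<bar>) \<noteq> \<infinity>"
    using Lp_space_cocycle_infinite[OF p g] p by (simp add: Lp_space_def)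
  ultimately have "Lp_norm M p ?h \<le> Lp_norm ?M p (cocycle g)"
    using sup_le p by (simp add: Lp_norm_def real_of_ereal_positive_mono)
  then show ?thesis using lower by linarith
qed

definition masses :: "nat \<Rightarrow> real" where
  "masses = (if p = \<infinity> then (\<lambda>_. 1) else tail_gap)"

lemma Lp_space_cocycle:
  assumes g: "g \<in> carrier G"
  shows "cocycle g \<in> Lp_space (weighted_prod M (weight masses)) p"
proof (cases "p = \<infinity>")
  case True
  then have "masses = (\<lambda>_. 1)" unfolding masses_def by simp
  then show ?thesis using Lp_space_cocycle_infinite[OF True g] by simp
next
  case False
  then have "masses = tail_gap" unfolding masses_def by simp
  then show ?thesis using Lp_space_cocycle_finite[OF False g] by simp
qed

lemma finite_cocycle_sublevel: "finite {g \<in> carrier G. Lp_norm (weighted_prod M (weight masses)) p (cocycle g) \<le> R}"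
proof (cases "p = \<infinity>")
  case True
  then have "masses = (\<lambda>_. 1)" unfolding masses_def by simp
  then show ?thesis
    using Lp_norm_cocycle_ge_infinite[OF True]
    by (intro finite_sublevel_if_\<rho>\<^sub>1_large[where Z="\<bar>R\<bar> + 1"]) fastforce
next
  case False
  then have "masses = tail_gap" unfolding masses_def by simp
  then show ?thesis
    using Lp_norm_cocycle_gt_finite[OF False]
    by (intro finite_sublevel_if_\<rho>\<^sub>1_large[where Z="max 1 (((\<bar>R\<bar> + 1) powr enn2real p)\<^sup>2)"]) simp
qed

theorem proper_affine_Lp_action_cocycle:
  "proper_affine_Lp_action G (weighted_prod M (weight masses)) p action cocycle"
  unfolding proper_affine_Lp_action_def
proof (intro conjI ballI allI impI)
  fix g F assume "g \<in> carrier G" and "F \<in> Lp_space (weighted_prod M (weight masses)) p"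
  then show "action g F \<in> Lp_space (weighted_prod M (weight masses)) p"
    and "Lp_norm (weighted_prod M (weight masses)) p (action g F) = Lp_norm (weighted_prod M (weight masses)) p F"
    by (rule Lp_space_action, rule Lp_norm_action)
next
  fix g F H assume "g \<in> carrier G" "F \<in> Lp_space (weighted_prod M (weight masses)) p"
    "H \<in> Lp_space (weighted_prod M (weight masses)) p" "ae_eq (weighted_prod M (weight masses)) F H"
  then show "ae_eq (weighted_prod M (weight masses)) (action g F) (action g H)"
    by (intro ae_eq_action Lp_space_measurable)
qed (simp_all add: ae_eq_def action_linear action_one action_mult cocycle_mult Lp_space_cocycle
      finite_cocycle_sublevel)

end

text \<open>The statement prescribes the type of the measure space, so the weighted space is moved into
it along an injection. The values \<open>1\<close> and \<open>2\<close> (rather than an indicator) keep the code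
injective also at junk points with empty second coordinate.\<close>

definition encode :: "(nat \<times> 'g set) \<times> 'a \<Rightarrow> (nat \<Rightarrow> nat \<Rightarrow> 'g \<Rightarrow> 'a \<Rightarrow> real) set set set" where
  "encode = (\<lambda>((n, z), \<omega>). {{{\<lambda>m _ g \<upsilon>. if m = n \<and> \<upsilon> = \<omega> then (if g \<in> z then 1 else 2) else 0}}})"

lemma inj_encode: "inj encode"
proof (rule injI)
  fix y y'
  assume eq: "encode y = encode y'"
  obtain n z \<omega> n' z' \<omega>' where y: "y = ((n, z), \<omega>)" and y': "y' = ((n', z'), \<omega>')"
    by (metis prod.collapse)
  from eq have codes: "(\<lambda>m (_::nat) g \<upsilon>. if m = n \<and> \<upsilon> = \<omega> then (if g \<in> z then 1 else 2) else 0 :: real)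
      = (\<lambda>m _ g \<upsilon>. if m = n' \<and> \<upsilon> = \<omega>' then (if g \<in> z' then 1 else 2) else 0)"
    by (simp add: encode_def y y')
  have code: "(if g \<in> z then 1 else 2 :: real) = (if n = n' \<and> \<omega> = \<omega>' then (if g \<in> z' then 1 else 2) else 0)" for g
    using fun_cong[OF fun_cong[OF fun_cong[OF fun_cong[OF codes, of n]], of g], of \<omega>] by simp
  then have same: "n = n' \<and> \<omega> = \<omega>'" by (metis zero_neq_one zero_neq_numeral)
  then have "g \<in> z \<longleftrightarrow> g \<in> z'" for g using code[of g] by (auto split: if_splits)
  then show "y = y'" using same by (auto simp: y y')
qed

theorem proposition1p2:
  fixes G :: "('g, 'm) monoid_scheme"
    and S :: "'g set"
    and N :: "nat \<Rightarrow> 'g set"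
    and p :: ennreal
    and M :: "'a measure"
    and f :: "nat \<times> 'g set \<Rightarrow> 'a \<Rightarrow> real"
  assumes "group G"
    and "finite S" and "S \<subseteq> carrier G" and "generate G S = carrier G"
    and "residually_finite G"
    and "\<And>i. N i \<lhd> G" and "\<And>i. finite_index G (N i)"
    and "\<And>i. N (Suc i) \<subseteq> N i"
    and "(\<Inter>i. N i) = {\<one>\<^bsub>G\<^esub>}"
    and "1 \<le> p"
    and "coarse_embedding_Lp (box_space G N) (box_dist G S N) M p f"
  shows "\<exists>(M' :: (nat \<Rightarrow> nat \<Rightarrow> 'g \<Rightarrow> 'a \<Rightarrow> real) set set set measure) \<pi> b.
           proper_affine_Lp_action G M' p \<pi> b"
proof -
  interpret group G by fact
  obtain \<rho>\<^sub>1 \<rho>\<^sub>2 :: "real \<Rightarrow> real" where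
    \<rho>: "mono_on (atLeast 0) \<rho>\<^sub>1" "mono_on (atLeast 0) \<rho>\<^sub>2" "filterlim \<rho>\<^sub>1 at_top at_top"
      "\<forall>x\<in>box_space G N. \<forall>y\<in>box_space G N. \<rho>\<^sub>1 (box_dist G S N x y) \<le> Lp_norm M p (\<lambda>w. f x w - f y w) \<and>
         Lp_norm M p (\<lambda>w. f x w - f y w) \<le> \<rho>\<^sub>2 (box_dist G S N x y)"
    and f_Lp: "\<forall>x\<in>box_space G N. f x \<in> Lp_space M p"
    using assms(11) unfolding coarse_embedding_Lp_def by blast
  obtain level where level: "\<And>n. inj_on (\<lambda>x. N (level n) #>\<^bsub>G\<^esub> x) {x \<in> carrier G. word_length G S x \<le> n}"
    using exists_level_inj_on_word_ball[OF assms(3,2,4,6,8,9)] by metis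
  interpret coarse_box_embedding G S N M p f \<rho>\<^sub>1 \<rho>\<^sub>2 level
    by (intro coarse_box_embedding.intro coarse_box_embedding_axioms.intro) (use assms \<rho> f_Lp level in auto)
  show ?thesis
    using proper_affine_Lp_action_embed_measure[OF proper_affine_Lp_action_cocycle inj_encode] by blast
qed

end
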